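(* A ring $R$ has the $2$-nil-sum property if and only if either $R$ is a simple ring with the $2$-nil-sum property, or $R$ is a commutative local ring whose Jacobson radical is nil.
   Context: All rings are associative with identity. A central unit of $R$ is a unit of $R$ lying in the center of $R$; a non central-unit is an element that is not a central unit. A ring $R$ has the $2$-nil-sum property if every non central-unit of $R$ is a sum of two nilpotent elements of $R$. *)

theory Defs
  imports Main
begin

text \<open>All rings are associative with identity; we use the type class ring_1
  (which also forces 0 \<noteq> 1, i.e. the ring is nonzero).\<close>

definition is_unit_r :: "'a::ring_1 \<Rightarrow> bool" where
  "is_unit_r x \<longleftrightarrow> (\<exists>y. x * y = 1 \<and> y * x = 1)"

definition is_central :: "'a::ring_1 \<Rightarrow> bool" where
  "is_central x \<longleftrightarrow> (\<forall>y. x * y = y * x)"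

definition central_unit :: "'a::ring_1 \<Rightarrow> bool" where
  "central_unit x \<longleftrightarrow> is_unit_r x \<and> is_central x"

definition nilpotent_el :: "'a::ring_1 \<Rightarrow> bool" where
  "nilpotent_el x \<longleftrightarrow> (\<exists>n::nat. x ^ n = 0)"

definition two_nil_sum :: "'a::ring_1 itself \<Rightarrow> bool" where
  "two_nil_sum _ \<longleftrightarrow>
     (\<forall>x::'a. \<not> central_unit x \<longrightarrow>
        (\<exists>a b. nilpotent_el a \<and> nilpotent_el b \<and> x = a + b))"

definition add_subgroup :: "'a::ring_1 set \<Rightarrow> bool" where
  "add_subgroup I \<longleftrightarrow> 0 \<in> I \<and> (\<forall>a\<in>I. \<forall>b\<in>I. a + b \<in> I) \<and> (\<forall>a\<in>I. - a \<in> I)"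

definition left_ideal :: "'a::ring_1 set \<Rightarrow> bool" where
  "left_ideal I \<longleftrightarrow> add_subgroup I \<and> (\<forall>r. \<forall>a\<in>I. r * a \<in> I)"

definition two_sided_ideal :: "'a::ring_1 set \<Rightarrow> bool" where
  "two_sided_ideal I \<longleftrightarrow> add_subgroup I \<and> (\<forall>r. \<forall>a\<in>I. r * a \<in> I \<and> a * r \<in> I)"

definition simple_ring :: "'a::ring_1 itself \<Rightarrow> bool" where
  "simple_ring _ \<longleftrightarrow> (\<forall>I::'a set. two_sided_ideal I \<longrightarrow> I = {0} \<or> I = UNIV)"

definition maximal_left_ideal :: "'a::ring_1 set \<Rightarrow> bool" where
  "maximal_left_ideal M \<longleftrightarrow> left_ideal M \<and> M \<noteq> UNIV \<and>
     (\<forall>J. left_ideal J \<and> M \<subseteq> J \<longrightarrow> J = M \<or> J = UNIV)"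

definition jacobson :: "'a::ring_1 itself \<Rightarrow> 'a set" where
  "jacobson _ = \<Inter> {M. maximal_left_ideal M}"

definition local_ring :: "'a::ring_1 itself \<Rightarrow> bool" where
  "local_ring _ \<longleftrightarrow> (\<exists>!M::'a set. maximal_left_ideal M)"

definition commutative_ring :: "'a::ring_1 itself \<Rightarrow> bool" where
  "commutative_ring _ \<longleftrightarrow> (\<forall>x y::'a. x * y = y * x)"

definition nil_set :: "'a::ring_1 set \<Rightarrow> bool" where
  "nil_set I \<longleftrightarrow> (\<forall>x\<in>I. nilpotent_el x)"

end

theory Submission
  imports Defs
begin

text \<open>Elements of a proper ideal I are central: otherwise 1 + i = a + b with a, b nilpotent,
  and then 1 - a is right invertible but nilpotent modulo I, forcing 1 \<in> I. If R is not
  simple, take a proper nonzero ideal I; its left annihilator A is a proper ideal containing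
  all commutators, i.e. R/A is commutative and nonzero. For a non-central x write
  x = a + b and 1 + x = c + d; then 1 = c + d - a - b is a sum of nilpotents of the
  commutative ring R/A, hence nilpotent there, so 1 \<in> A. Thus R is commutative, and then
  the non-units are exactly the nilpotent elements, which form the unique maximal ideal.
  Conversely, in a commutative local ring with nil maximal ideal M every non-unit lies in M
  (since 1 - m is a unit for m \<in> M) and is nilpotent, i.e. of the form x + 0.\<close>

lemma two_sided_ideal_zero: "two_sided_ideal I \<Longrightarrow> 0 \<in> I"
  and two_sided_ideal_add: "two_sided_ideal I \<Longrightarrow> a \<in> I \<Longrightarrow> b \<in> I \<Longrightarrow> a + b \<in> I"
  and two_sided_ideal_uminus: "two_sided_ideal I \<Longrightarrow> a \<in> I \<Longrightarrow> - a \<in> I"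
  and two_sided_ideal_mult_left: "two_sided_ideal I \<Longrightarrow> a \<in> I \<Longrightarrow> r * a \<in> I"
  and two_sided_ideal_mult_right: "two_sided_ideal I \<Longrightarrow> a \<in> I \<Longrightarrow> a * r \<in> I"
  by (simp_all add: two_sided_ideal_def add_subgroup_def)

lemma two_sided_ideal_imp_left_ideal: "two_sided_ideal I \<Longrightarrow> left_ideal I"
  by (simp add: two_sided_ideal_def left_ideal_def)

lemma two_sided_ideal_singleton_zero: "two_sided_ideal {0}"
  by (simp add: two_sided_ideal_def add_subgroup_def)

lemma left_ideal_eq_UNIV_if_unit:
  assumes "left_ideal J" and "u \<in> J" and "is_unit_r u"
  shows "J = UNIV"
proof -
  obtain v where "v * u = 1" using \<open>is_unit_r u\<close> unfolding is_unit_r_def by blast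
  then have "1 \<in> J" using assms(1,2) unfolding left_ideal_def by metis
  then show ?thesis using assms(1) unfolding left_ideal_def by (metis UNIV_eq_I mult.right_neutral)
qed

lemma nilpotent_el_uminus: "nilpotent_el x \<Longrightarrow> nilpotent_el (- x)"
  unfolding nilpotent_el_def by (metis mult_zero_right power_minus)

lemma geometric_sum_mult:
  fixes x :: "'a::ring_1"
  shows "(1 - x) * (\<Sum>i<n. x ^ i) = 1 - x ^ n"
proof (induction n)
  case (Suc n)
  have "(1 - x) * (\<Sum>i<Suc n. x ^ i) = (1 - x) * (\<Sum>i<n. x ^ i) + (1 - x) * x ^ n"
    by (simp add: distrib_left)
  also have "\<dots> = 1 - x ^ Suc n" using Suc by (simp add: algebra_simps power_Suc2)
  finally show ?case .
qed simp

lemma one_minus_nilpotent_right_invertible: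
  fixes a :: "'a::ring_1"
  assumes "nilpotent_el a"
  shows "\<exists>w. (1 - a) * w = 1"
  using assms geometric_sum_mult[of a] unfolding nilpotent_el_def by (metis diff_zero)

lemma nilpotent_el_not_unit:
  assumes "nilpotent_el x"
  shows "\<not> is_unit_r x"
proof
  assume "is_unit_r x"
  then obtain y where "x * y = 1" unfolding is_unit_r_def by blast
  moreover obtain n where "x ^ n = 0" using assms unfolding nilpotent_el_def by blast
  ultimately show False using left_right_inverse_power[of x y n] by simp
qed

section \<open>Nilpotency modulo an ideal\<close>

definition nilpotent_mod :: "'a::ring_1 set \<Rightarrow> 'a \<Rightarrow> bool" where
  "nilpotent_mod A x \<longleftrightarrow> (\<exists>n. x ^ n \<in> A)"

lemma nilpotent_mod_singleton_zero_iff: "nilpotent_mod {0} x \<longleftrightarrow> nilpotent_el x"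
  by (simp add: nilpotent_mod_def nilpotent_el_def)

lemma nilpotent_el_imp_nilpotent_mod: "two_sided_ideal A \<Longrightarrow> nilpotent_el x \<Longrightarrow> nilpotent_mod A x"
  unfolding nilpotent_mod_def nilpotent_el_def using two_sided_ideal_zero by metis

lemma power_add_ideal_diff_mem:
  fixes x :: "'a::ring_1"
  assumes A: "two_sided_ideal A" and "j \<in> A"
  shows "(x + j) ^ n - x ^ n \<in> A"
proof (induction n)
  case 0
  then show ?case using two_sided_ideal_zero[OF A] by simp
next
  case (Suc n)
  define e where "e = (x + j) ^ n - x ^ n"
  have "(x + j) ^ Suc n - x ^ Suc n = x ^ n * j + e * x + e * j"
    unfolding power_Suc2 by (simp add: e_def algebra_simps)
  then show ?case
    using Suc \<open>j \<in> A\<close> A by (metis e_def two_sided_ideal_add two_sided_ideal_mult_left two_sided_ideal_mult_right)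
qed

lemma nilpotent_mod_cong:
  assumes "two_sided_ideal A" and "x - y \<in> A" and "nilpotent_mod A y"
  shows "nilpotent_mod A x"
proof -
  obtain n where "y ^ n \<in> A" using assms(3) unfolding nilpotent_mod_def by blast
  moreover have "(y + (x - y)) ^ n - y ^ n \<in> A"
    using power_add_ideal_diff_mem[OF assms(1,2)] .
  ultimately have "x ^ n \<in> A"
    using two_sided_ideal_add[OF assms(1)] by fastforce
  then show ?thesis unfolding nilpotent_mod_def by blast
qed

lemma one_mem_if_right_invertible_nilpotent_mod:
  assumes "two_sided_ideal A" and "x * w = 1" and "nilpotent_mod A x"
  shows "1 \<in> A"
proof -
  obtain n where "x ^ n \<in> A" using assms(3) unfolding nilpotent_mod_def by blast
  then have "x ^ n * w ^ n \<in> A" using two_sided_ideal_mult_right[OF assms(1)] by blast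
  then show ?thesis using left_right_inverse_power[OF assms(2)] by simp
qed

lemma power_add_decomposition_mod:
  fixes a b :: "'a::ring_1"
  assumes A: "two_sided_ideal A" and comm: "\<And>x y. x * y - y * x \<in> A"
  shows "\<exists>c d. (a + b) ^ (i + j) - (a ^ i * c + b ^ j * d) \<in> A"
proof (induction "i + j" arbitrary: i j)
  case 0
  then show ?case
    using two_sided_ideal_zero[OF A] by (intro exI[of _ 1] exI[of _ 0]) simp
next
  case (Suc n)
  consider "i = 0" | "j = 0" | i' j' where "i = Suc i'" "j = Suc j'"
    by (meson not0_implies_Suc)
  then show ?case
  proof cases
    case 1
    then show ?thesis
      using two_sided_ideal_zero[OF A] by (intro exI[of _ "(a + b) ^ (i + j)"] exI[of _ 0]) simp
  next
    case 2
    then show ?thesis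
      using two_sided_ideal_zero[OF A] by (intro exI[of _ 0] exI[of _ "(a + b) ^ (i + j)"]) simp
  next
    case 3
    obtain c1 d1 where e1: "(a + b) ^ n - (a ^ i' * c1 + b ^ j * d1) \<in> A"
      using Suc.hyps(1)[of i' j] Suc.hyps(2) 3 by auto
    obtain c2 d2 where e2: "(a + b) ^ n - (a ^ i * c2 + b ^ j' * d2) \<in> A"
      using Suc.hyps(1)[of i j'] Suc.hyps(2) 3 by auto
    have "a ^ i = a ^ i' * a" "b ^ j = b ^ j' * b"
      using 3 by (simp_all only: power_Suc2)
    moreover have "(a + b) ^ (i + j) = (a + b) ^ n * (a + b)"
      unfolding Suc.hyps(2)[symmetric] by (rule power_Suc2)
    ultimately have "(a + b) ^ (i + j) - (a ^ i * (c1 + c2 * b) + b ^ j * (d1 * a + d2))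
        = ((a + b) ^ n - (a ^ i' * c1 + b ^ j * d1)) * a
          + ((a + b) ^ n - (a ^ i * c2 + b ^ j' * d2)) * b
          + a ^ i' * (c1 * a - a * c1) + b ^ j' * (d2 * b - b * d2)"
      by (simp only:) (simp add: algebra_simps)
    also have "\<dots> \<in> A"
      using e1 e2 comm A
      by (meson two_sided_ideal_add two_sided_ideal_mult_left two_sided_ideal_mult_right)
    finally show ?thesis by blast
  qed
qed

lemma nilpotent_mod_add:
  assumes A: "two_sided_ideal A" and comm: "\<And>x y. x * y - y * x \<in> A"
    and "nilpotent_mod A a" and "nilpotent_mod A b"
  shows "nilpotent_mod A (a + b)"
proof -
  obtain i j where "a ^ i \<in> A" "b ^ j \<in> A"
    using assms(3,4) unfolding nilpotent_mod_def by blast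
  moreover obtain c d where "(a + b) ^ (i + j) - (a ^ i * c + b ^ j * d) \<in> A"
    using power_add_decomposition_mod[OF A comm] by blast
  ultimately have "(a + b) ^ (i + j) \<in> A"
    using A by (metis diff_add_cancel two_sided_ideal_add two_sided_ideal_mult_right)
  then show ?thesis unfolding nilpotent_mod_def by blast
qed

lemma nilpotent_el_add:
  assumes "commutative_ring TYPE('a::ring_1)" and "nilpotent_el (a :: 'a)" and "nilpotent_el b"
  shows "nilpotent_el (a + b)"
  using nilpotent_mod_add[OF two_sided_ideal_singleton_zero, of a b] assms
  unfolding commutative_ring_def nilpotent_mod_singleton_zero_iff by simp

section \<open>Rings with the 2-nil-sum property that are not simple\<close>

lemma two_nil_sum_proper_ideal_central:
  assumes T: "two_nil_sum TYPE('a::ring_1)" and I: "two_sided_ideal I" and "I \<noteq> UNIV"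
    and "(i :: 'a) \<in> I"
  shows "is_central i"
proof (rule ccontr)
  assume "\<not> is_central i"
  then have "\<not> central_unit (1 + i)"
    by (simp add: central_unit_def is_central_def algebra_simps)
  then obtain a b where a: "nilpotent_el a" and b: "nilpotent_el b" and "1 + i = a + b"
    using T unfolding two_nil_sum_def by blast
  then have "(1 - a) - b = - i" by (simp add: algebra_simps)
  then have "(1 - a) - b \<in> I" using \<open>i \<in> I\<close> two_sided_ideal_uminus[OF I] by simp
  then have "nilpotent_mod I (1 - a)"
    using nilpotent_mod_cong[OF I] nilpotent_el_imp_nilpotent_mod[OF I b] by blast
  moreover obtain w where "(1 - a) * w = 1" using one_minus_nilpotent_right_invertible[OF a] by blast
  ultimately have "1 \<in> I" using one_mem_if_right_invertible_nilpotent_mod[OF I] by blast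
  then show False
    using \<open>I \<noteq> UNIV\<close> two_sided_ideal_mult_left[OF I, of 1] by force
qed

lemma two_nil_sum_commutative_if_commutators_in_proper_ideal:
  assumes T: "two_nil_sum TYPE('a::ring_1)" and A: "two_sided_ideal A"
    and comm: "\<And>x y :: 'a. x * y - y * x \<in> A" and "1 \<notin> A"
  shows "commutative_ring TYPE('a)"
  unfolding commutative_ring_def
proof (rule ccontr)
  assume "\<not> (\<forall>x y :: 'a. x * y = y * x)"
  then obtain x :: 'a where "\<not> is_central x" unfolding is_central_def by blast
  then have "\<not> central_unit x" "\<not> central_unit (1 + x)"
    by (simp_all add: central_unit_def is_central_def algebra_simps)
  then obtain a b c d where nil: "nilpotent_el a" "nilpotent_el b" "nilpotent_el c" "nilpotent_el d"
    and "x = a + b" and "1 + x = c + d"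
    using T unfolding two_nil_sum_def by meson
  then have "1 = c + d + - a + - b" by (simp add: algebra_simps)
  moreover have "nilpotent_mod A (c + d + - a + - b)"
    using nil nilpotent_el_uminus nilpotent_el_imp_nilpotent_mod[OF A]
      nilpotent_mod_add[OF A comm] by metis
  ultimately show False
    using \<open>1 \<notin> A\<close> unfolding nilpotent_mod_def by simp
qed

definition left_annihilator :: "'a::ring_1 set \<Rightarrow> 'a set" where
  "left_annihilator I = {r. \<forall>i\<in>I. r * i = 0}"

lemma two_sided_ideal_left_annihilator:
  assumes "left_ideal I"
  shows "two_sided_ideal (left_annihilator I)"
  using assms
  by (auto simp: two_sided_ideal_def add_subgroup_def left_ideal_def left_annihilator_def
      distrib_right mult.assoc)

lemma commutator_mem_left_annihilator:
  assumes "left_ideal I" and central: "\<And>i. i \<in> I \<Longrightarrow> is_central i"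
  shows "x * y - y * x \<in> left_annihilator I"
  unfolding left_annihilator_def
proof (intro CollectI ballI)
  fix i assume "i \<in> I"
  have "x * y * i = (x * i) * y"
    using central \<open>i \<in> I\<close> unfolding is_central_def by (metis mult.assoc)
  also have "\<dots> = y * x * i"
    using central \<open>left_ideal I\<close> \<open>i \<in> I\<close> unfolding is_central_def left_ideal_def
    by (metis mult.assoc)
  finally show "(x * y - y * x) * i = 0" by (simp add: algebra_simps)
qed

lemma two_nil_sum_not_simple_imp_commutative:
  assumes T: "two_nil_sum TYPE('a::ring_1)" and "\<not> simple_ring TYPE('a)"
  shows "commutative_ring TYPE('a)"
proof -
  obtain I :: "'a set" where I: "two_sided_ideal I" and "I \<noteq> {0}" and "I \<noteq> UNIV"
    using assms(2) unfolding simple_ring_def by blast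
  have "left_ideal I" using I by (rule two_sided_ideal_imp_left_ideal)
  have "1 \<notin> left_annihilator I"
    using \<open>I \<noteq> {0}\<close> two_sided_ideal_zero[OF I] unfolding left_annihilator_def by auto
  then show ?thesis
    using two_nil_sum_commutative_if_commutators_in_proper_ideal[OF T]
      two_sided_ideal_left_annihilator[OF \<open>left_ideal I\<close>]
      commutator_mem_left_annihilator[OF \<open>left_ideal I\<close>]
      two_nil_sum_proper_ideal_central[OF T I \<open>I \<noteq> UNIV\<close>]
    by blast
qed

section \<open>Commutative local rings\<close>

lemma commutative_unit_iff:
  assumes "commutative_ring TYPE('a::ring_1)"
  shows "is_unit_r (x :: 'a) \<longleftrightarrow> (\<exists>y. x * y = 1)"
  using assms unfolding commutative_ring_def is_unit_r_def by metis

lemma commutative_central_unit_iff: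
  assumes "commutative_ring TYPE('a::ring_1)"
  shows "central_unit (x :: 'a) \<longleftrightarrow> is_unit_r x"
  using assms unfolding commutative_ring_def central_unit_def is_central_def by blast

lemma maximal_left_ideal_nonunits:
  assumes C: "commutative_ring TYPE('a::ring_1)"
    and add: "\<And>x y :: 'a. \<not> is_unit_r x \<Longrightarrow> \<not> is_unit_r y \<Longrightarrow> \<not> is_unit_r (x + y)"
  shows "maximal_left_ideal {x :: 'a. \<not> is_unit_r x}" (is "maximal_left_ideal ?M")
proof -
  have comm: "\<And>x y :: 'a. x * y = y * x" using C unfolding commutative_ring_def by blast
  have "\<not> is_unit_r (- x)" if "\<not> is_unit_r x" for x :: 'a
    using that unfolding commutative_unit_iff[OF C] by (metis minus_mult_commute mult_minus_right)
  moreover have "\<not> is_unit_r (r * x)" if "\<not> is_unit_r x" for r x :: 'a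
    using that unfolding commutative_unit_iff[OF C] by (metis comm mult.assoc)
  moreover have "\<not> is_unit_r (0 :: 'a)" by (simp add: is_unit_r_def)
  ultimately have "left_ideal ?M"
    unfolding left_ideal_def add_subgroup_def using add by blast
  moreover have "1 \<notin> ?M" by (simp add: is_unit_r_def)
  then have "?M \<noteq> UNIV" by blast
  moreover have "J = ?M \<or> J = UNIV" if "left_ideal J" "?M \<subseteq> J" for J
    using that left_ideal_eq_UNIV_if_unit by blast
  ultimately show ?thesis unfolding maximal_left_ideal_def by blast
qed

lemma maximal_left_ideal_subset_nonunits:
  "maximal_left_ideal N \<Longrightarrow> N \<subseteq> {x. \<not> is_unit_r x}"
  unfolding maximal_left_ideal_def using left_ideal_eq_UNIV_if_unit by blast

lemma jacobson_eq_if_unique_maximal: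
  assumes "maximal_left_ideal M" and "\<And>N. maximal_left_ideal N \<Longrightarrow> N = M"
  shows "jacobson TYPE('a::ring_1) = M"
proof -
  have "{N. maximal_left_ideal N} = {M}" using assms by blast
  then show ?thesis unfolding jacobson_def by simp
qed

lemma local_ring_if_nonunits_maximal:
  assumes M: "maximal_left_ideal {x :: 'a::ring_1. \<not> is_unit_r x}"
  shows "local_ring TYPE('a)" and "jacobson TYPE('a) = {x. \<not> is_unit_r x}"
proof -
  have "N = {x. \<not> is_unit_r x}" if "maximal_left_ideal N" for N :: "'a set"
    using M that maximal_left_ideal_subset_nonunits unfolding maximal_left_ideal_def by blast
  then show "local_ring TYPE('a)" and "jacobson TYPE('a) = {x. \<not> is_unit_r x}"
    using M jacobson_eq_if_unique_maximal unfolding local_ring_def by blast+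
qed

lemma two_nil_sum_commutative_nonunit_iff_nilpotent:
  assumes "two_nil_sum TYPE('a::ring_1)" and C: "commutative_ring TYPE('a)"
  shows "\<not> is_unit_r (x :: 'a) \<longleftrightarrow> nilpotent_el x"
  using assms nilpotent_el_add[OF C] nilpotent_el_not_unit
  unfolding two_nil_sum_def commutative_central_unit_iff[OF C] by blast

lemma two_nil_sum_commutative_imp_local_nil:
  assumes T: "two_nil_sum TYPE('a::ring_1)" and C: "commutative_ring TYPE('a)"
  shows "local_ring TYPE('a)" and "nil_set (jacobson TYPE('a))"
proof -
  note nonunit_iff = two_nil_sum_commutative_nonunit_iff_nilpotent[OF T C]
  have M: "maximal_left_ideal {x :: 'a. \<not> is_unit_r x}"
    using maximal_left_ideal_nonunits[OF C] nilpotent_el_add[OF C] unfolding nonunit_iff by blast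
  show "local_ring TYPE('a)" using local_ring_if_nonunits_maximal(1)[OF M] .
  show "nil_set (jacobson TYPE('a))"
    using local_ring_if_nonunits_maximal(2)[OF M] nonunit_iff unfolding nil_set_def by auto
qed

lemma left_ideal_add_principal:
  assumes "left_ideal M"
  shows "left_ideal {m + r * x | m r. m \<in> M}"
  unfolding left_ideal_def add_subgroup_def
proof (intro conjI ballI allI)
  have M: "0 \<in> M" "\<And>a b. a \<in> M \<Longrightarrow> b \<in> M \<Longrightarrow> a + b \<in> M" "\<And>a. a \<in> M \<Longrightarrow> - a \<in> M"
    "\<And>s a. a \<in> M \<Longrightarrow> s * a \<in> M"
    using assms unfolding left_ideal_def add_subgroup_def by blast+
  have mem: "m + r * x \<in> {m + r * x | m r. m \<in> M}" if "m \<in> M" for m r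
    using that by blast
  show "0 \<in> {m + r * x | m r. m \<in> M}" using mem[OF M(1), of 0] by simp
  fix a b s assume "a \<in> {m + r * x | m r. m \<in> M}" "b \<in> {m + r * x | m r. m \<in> M}"
  then obtain m1 r1 m2 r2 where "a = m1 + r1 * x" "m1 \<in> M" "b = m2 + r2 * x" "m2 \<in> M"
    by blast
  moreover have "a + b = (m1 + m2) + (r1 + r2) * x" "- a = - m1 + (- r1) * x"
    "s * a = s * m1 + (s * r1) * x"
    using calculation by (simp_all add: algebra_simps)
  ultimately show "a + b \<in> {m + r * x | m r. m \<in> M}" "- a \<in> {m + r * x | m r. m \<in> M}"
    "s * a \<in> {m + r * x | m r. m \<in> M}"
    using M by blast+
qed

lemma commutative_nonunit_mem_nil_maximal:
  assumes C: "commutative_ring TYPE('a::ring_1)" and M: "maximal_left_ideal M"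
    and nil: "nil_set M" and "\<not> is_unit_r (x :: 'a)"
  shows "x \<in> M"
proof (rule ccontr)
  assume "x \<notin> M"
  define K where "K = {m + r * x | m r. m \<in> M}"
  have "left_ideal M" using M unfolding maximal_left_ideal_def by blast
  have mem: "m + r * x \<in> K" if "m \<in> M" for m r
    using that unfolding K_def by blast
  have "0 \<in> M" using \<open>left_ideal M\<close> unfolding left_ideal_def add_subgroup_def by blast
  then have "x \<in> K" using mem[of 0 1] by simp
  moreover have "M \<subseteq> K" using mem[of _ 0] by auto
  ultimately have "K = UNIV"
    using M \<open>x \<notin> M\<close> left_ideal_add_principal[OF \<open>left_ideal M\<close>, of x]
    unfolding maximal_left_ideal_def K_def by blast
  then obtain m r where "1 = m + r * x" and "m \<in> M" unfolding K_def by blast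
  then have "r * x = 1 - m" by (simp add: algebra_simps)
  moreover obtain w where "(1 - m) * w = 1"
    using one_minus_nilpotent_right_invertible nil \<open>m \<in> M\<close> unfolding nil_set_def by blast
  ultimately have "(r * x) * w = 1" by simp
  moreover have "x * r = r * x" using C unfolding commutative_ring_def by blast
  ultimately have "x * (r * w) = 1" by (simp only: mult.assoc[symmetric])
  then show False using \<open>\<not> is_unit_r x\<close> commutative_unit_iff[OF C] by blast
qed

lemma commutative_local_nil_imp_two_nil_sum:
  assumes C: "commutative_ring TYPE('a::ring_1)" and "local_ring TYPE('a)"
    and nil: "nil_set (jacobson TYPE('a))"
  shows "two_nil_sum TYPE('a)"
proof -
  obtain M :: "'a set" where M: "maximal_left_ideal M"
    and unique: "\<And>N. maximal_left_ideal N \<Longrightarrow> N = M"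
    using \<open>local_ring TYPE('a)\<close> unfolding local_ring_def by blast
  have "nil_set M" using nil jacobson_eq_if_unique_maximal[OF M unique] by simp
  then have "nilpotent_el x" if "\<not> is_unit_r x" for x :: 'a
    using commutative_nonunit_mem_nil_maximal[OF C M] that unfolding nil_set_def by blast
  moreover have "nilpotent_el (0 :: 'a)" unfolding nilpotent_el_def by (auto intro: exI[of _ 1])
  ultimately show ?thesis
    unfolding two_nil_sum_def commutative_central_unit_iff[OF C] by (metis add.right_neutral)
qed

theorem theorem2p2:
  shows "two_nil_sum TYPE('a::ring_1) \<longleftrightarrow>
    ((simple_ring TYPE('a) \<and> two_nil_sum TYPE('a)) \<or>
     (commutative_ring TYPE('a) \<and> local_ring TYPE('a) \<and> nil_set (jacobson TYPE('a))))"
  using two_nil_sum_not_simple_imp_commutative two_nil_sum_commutative_imp_local_nil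
    commutative_local_nil_imp_two_nil_sum
  by blast

end
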